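(* Let $a>0$, $h>0$, and let $\alpha_1$ be the smallest positive solution $q$ of $\tan(hq)=\frac{2aq}{q^2-a^2}$. If $ha\le1$, then $$\alpha_1\le\sqrt{a^2+\frac{2a}{h}}\le\frac{\sqrt{3a}}{\sqrt h}.$$ If moreover $ha\le 1/3$, then $$\sqrt{a^2+\frac{2a}{h+2ah^2}}\le\alpha_1.$$ Consequently, $\lim_{h\to0}\frac{\alpha_1(h)}{\sqrt{2a/h}}=1$. *)

theory Defs
  imports Complex_Main
begin

text \<open>Positive solutions q of tan(h q) = 2 a q / (q^2 - a^2). Points where either
  side is undefined (cos (h q) = 0, or q = a) are excluded, since Isabelle's
  tan and division are total.\<close>
definition tan_solutions :: "real \<Rightarrow> real \<Rightarrow> real set" where
  "tan_solutions a h = {q. q > 0 \<and> q \<noteq> a \<and> cos (h * q) \<noteq> 0 \<and>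
      tan (h * q) = 2 * a * q / (q^2 - a^2)}"

definition alpha1 :: "real \<Rightarrow> real \<Rightarrow> real" where
  "alpha1 a h = Inf (tan_solutions a h)"

end

theory Submission
  imports Defs "HOL-Analysis.Complex_Transcendental"
begin

text \<open>Away from the poles, q > a solves the equation iff it is a zero of
  f q = sin (h q) (q^2 - a^2) - 2 a q cos (h q). Put Q = sqrt (a^2 + 2 a / h), so that
  Q^2 - a^2 = 2 a / h. Then f a < 0, while f Q = (2 a / h) (sin (h Q) - h Q cos (h Q)) \<ge> 0
  if h Q \<le> pi/2, and f > 0 at the pole pi / (2 h) otherwise; the intermediate value theorem
  gives a solution below Q. Conversely, for h a \<le> 1/3 a solution below Q has x = h q < 1, and
  cos x \<ge> 1 - x^2/2 yields tan x \<le> (1 + 2 h a) x, which rearranges to the lower bound.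
  Both bounds are sqrt (2 a / h) (1 + O(h)), whence the limit.\<close>

lemma x_cos_le_sin:
  fixes x :: real
  assumes "0 \<le> x" "x \<le> pi"
  shows "x * cos x \<le> sin x"
proof -
  have "(\<lambda>t. sin t - t * cos t) 0 \<le> (\<lambda>t. sin t - t * cos t) x"
  proof (rule DERIV_nonneg_imp_nondecreasing[OF assms(1)])
    fix t :: real
    assume t: "0 \<le> t" "t \<le> x"
    have "DERIV (\<lambda>t. sin t - t * cos t) t :> t * sin t"
      by (auto intro!: derivative_eq_intros)
    moreover have "0 \<le> t * sin t"
      using t assms by (intro mult_nonneg_nonneg sin_ge_zero) auto
    ultimately show "\<exists>y. DERIV (\<lambda>t. sin t - t * cos t) t :> y \<and> y \<ge> 0"
      by blast
  qed
  then show ?thesis by simp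
qed

lemma cos_ge_one_minus_half_square:
  fixes x :: real
  shows "1 - x\<^sup>2 / 2 \<le> cos x"
proof -
  have "\<bar>sin (x/2)\<bar>\<^sup>2 \<le> \<bar>x/2\<bar>\<^sup>2"
    by (intro power_mono abs_sin_x_le_abs_x) simp
  then show ?thesis
    using cos_double_sin[of "x/2"] by (simp add: power_divide)
qed

lemma tan_le_mult_self:
  fixes x c :: real
  assumes "0 \<le> x" "0 < c" "1 \<le> c * (1 - x\<^sup>2 / 2)"
  shows "tan x \<le> c * x"
proof -
  have "0 < 1 - x\<^sup>2 / 2"
    using zero_less_mult_pos[of c "1 - x\<^sup>2 / 2"] assms(2,3) by linarith
  then have cos_pos: "0 < cos x"
    using cos_ge_one_minus_half_square[of x] by linarith
  have "sin x \<le> x"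
    using assms(1) by (rule sin_x_le_x)
  also have "\<dots> \<le> x * (c * (1 - x\<^sup>2 / 2))"
    using assms(1,3) by (simp add: mult_le_cancel_left1)
  also have "\<dots> \<le> x * (c * cos x)"
    using assms(1,2) cos_ge_one_minus_half_square[of x] by (intro mult_left_mono) auto
  finally show ?thesis
    using cos_pos by (simp add: tan_def divide_le_eq algebra_simps)
qed

lemma tan_le_one_plus_mult:
  fixes t x :: real
  assumes "0 \<le> t" "t \<le> 1/3" "0 \<le> x" "x\<^sup>2 \<le> t\<^sup>2 + 2 * t"
  shows "tan x \<le> (1 + 2 * t) * x"
proof (rule tan_le_mult_self)
  have "t\<^sup>2 \<le> (1/3)\<^sup>2"
    using assms(1,2) by (intro power_mono) auto
  then have "0 \<le> 1 - 5/2 * t - t\<^sup>2"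
    using assms(2) by (simp add: power_divide)
  then have "0 \<le> t * (1 - 5/2 * t - t\<^sup>2)"
    using assms(1) by simp
  then have "1 \<le> (1 + 2 * t) * (1 - (t\<^sup>2 + 2 * t) / 2)"
    by (simp add: algebra_simps power2_eq_square)
  also have "\<dots> \<le> (1 + 2 * t) * (1 - x\<^sup>2 / 2)"
    using assms by (intro mult_left_mono) auto
  finally show "1 \<le> (1 + 2 * t) * (1 - x\<^sup>2 / 2)" .
qed (use assms in auto)

lemma mult_sqrt_sq_plus:
  fixes a h :: real
  assumes "0 < h"
  shows "h * sqrt (a\<^sup>2 + 2 * a / h) = sqrt ((h * a)\<^sup>2 + 2 * (h * a))"
proof -
  have "(h * a)\<^sup>2 + 2 * (h * a) = h\<^sup>2 * (a\<^sup>2 + 2 * a / h)"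
    using assms by (simp add: field_simps power2_eq_square)
  then show ?thesis
    using assms by (simp add: real_sqrt_mult)
qed

lemma sqrt_sq_plus_le_sqrt_div:
  fixes a h :: real
  assumes "0 < a" "0 < h" "h * a \<le> 1"
  shows "sqrt (a\<^sup>2 + 2 * a / h) \<le> sqrt (3 * a) / sqrt h"
proof -
  have "a * a \<le> a * (1 / h)"
    using assms by (intro mult_left_mono) (auto simp: field_simps mult.commute)
  then have "a\<^sup>2 + 2 * a / h \<le> 3 * a / h"
    by (simp add: power2_eq_square)
  then show ?thesis
    by (metis real_sqrt_le_mono real_sqrt_divide)
qed

lemma sqrt_sq_plus_div_sqrt:
  fixes a h d :: real
  assumes "0 < a" "0 < h" "0 < d"
  shows "sqrt (a\<^sup>2 + 2 * a / (h * d)) / sqrt (2 * a / h) = sqrt (a * h / 2 + 1 / d)"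
proof -
  have "(a\<^sup>2 + 2 * a / (h * d)) / (2 * a / h) = a * h / 2 + 1 / d"
    using assms by (simp add: field_simps power2_eq_square)
  then show ?thesis
    by (metis real_sqrt_divide)
qed

definition tan_residual :: "real \<Rightarrow> real \<Rightarrow> real \<Rightarrow> real" where
  "tan_residual a h q = sin (h * q) * (q\<^sup>2 - a\<^sup>2) - 2 * a * q * cos (h * q)"

lemma tan_solutionsI:
  fixes a h q :: real
  assumes "0 \<le> a" "a < q" "0 < cos (h * q)" "tan_residual a h q = 0"
  shows "q \<in> tan_solutions a h"
proof -
  have "0 < q\<^sup>2 - a\<^sup>2"
    using assms(1,2) by (simp add: power_strict_mono)
  then have "tan (h * q) = 2 * a * q / (q\<^sup>2 - a\<^sup>2)"
    using assms(3,4) by (simp add: tan_residual_def tan_def field_simps)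
  then show ?thesis
    unfolding tan_solutions_def using assms by auto
qed

lemma tan_residual_pos_at_pole:
  fixes a h q :: real
  assumes "0 \<le> a" "a < q" "h * q = pi / 2"
  shows "0 < tan_residual a h q"
  using assms unfolding tan_residual_def assms(3) by (simp add: power_strict_mono)

lemma tan_residual_nonneg_at_sqrt:
  fixes a h :: real
  assumes "0 < a" "0 < h" "h * sqrt (a\<^sup>2 + 2 * a / h) \<le> pi / 2"
  shows "0 \<le> tan_residual a h (sqrt (a\<^sup>2 + 2 * a / h))"
proof -
  define Q where "Q = sqrt (a\<^sup>2 + 2 * a / h)"
  have "0 \<le> h * Q"
    unfolding Q_def using assms(1,2) by simp
  then have "h * Q * cos (h * Q) \<le> sin (h * Q)"
    using assms(3) pi_gt_zero unfolding Q_def by (intro x_cos_le_sin) linarith+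
  then have "0 \<le> (2 * a / h) * (sin (h * Q) - h * Q * cos (h * Q))"
    using assms(1,2) by simp
  also have "\<dots> = tan_residual a h Q"
    unfolding tan_residual_def Q_def using assms(1,2) by (simp add: algebra_simps)
  finally show ?thesis
    unfolding Q_def .
qed

lemma tan_solution_gt:
  fixes a h q :: real
  assumes "0 < a" "q \<in> tan_solutions a h" "0 < tan (h * q)"
  shows "a < q"
proof (rule ccontr)
  assume "\<not> a < q"
  with assms(2) have "0 < q" "q < a" "tan (h * q) = 2 * a * q / (q\<^sup>2 - a\<^sup>2)"
    unfolding tan_solutions_def by auto
  then have "tan (h * q) < 0"
    using assms(1) by (simp add: power_strict_mono divide_pos_neg)
  with assms(3) show False by simp
qed

lemma alpha1_le:
  assumes "q \<in> tan_solutions a h"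
  shows "alpha1 a h \<le> q"
proof -
  have "bdd_below (tan_solutions a h)"
    unfolding tan_solutions_def by (rule bdd_belowI[of _ 0]) auto
  then show ?thesis
    unfolding alpha1_def by (rule cInf_lower[OF assms])
qed

lemma tan_solution_le_sqrt:
  fixes a h :: real
  assumes a: "0 < a" and h: "0 < h" and ha: "h * a \<le> 1"
  shows "\<exists>q \<in> tan_solutions a h. q \<le> sqrt (a\<^sup>2 + 2 * a / h)"
proof -
  define Q where "Q = sqrt (a\<^sup>2 + 2 * a / h)"
  define b where "b = min Q (pi / (2 * h))"
  have "a < Q"
    unfolding Q_def using a h by (intro real_less_rsqrt) simp
  moreover have "h * a < pi / 2"
    using ha pi_gt3 by linarith
  ultimately have a_lt_b: "a < b"
    unfolding b_def using h by (simp add: field_simps)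
  have "0 < cos (h * a)"
    using \<open>h * a < pi / 2\<close> a h by (intro cos_gt_zero) auto
  then have "tan_residual a h a < 0"
    unfolding tan_residual_def using a by simp
  moreover have "0 \<le> tan_residual a h b"
  proof (cases "h * Q \<le> pi / 2")
    case True
    then have "b = Q"
      unfolding b_def using h by (simp add: field_simps)
    with True show ?thesis
      unfolding Q_def using a h by (simp add: tan_residual_nonneg_at_sqrt)
  next
    case False
    then have "h * b = pi / 2"
      unfolding b_def using h by (simp add: field_simps)
    then show ?thesis
      using tan_residual_pos_at_pole a_lt_b a less_imp_le by blast
  qed
  moreover have "continuous_on {a..b} (tan_residual a h)"
    unfolding tan_residual_def by (intro continuous_intros)
  ultimately obtain q where q: "a \<le> q" "q \<le> b" "tan_residual a h q = 0"
    using IVT'[of "tan_residual a h" a 0 b] a_lt_b by auto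
  have "a < q"
    using q \<open>tan_residual a h a < 0\<close> by (cases "q = a") auto
  have "h * q \<le> pi / 2"
    using q(2) h unfolding b_def by (simp add: field_simps)
  moreover have "h * q \<noteq> pi / 2"
    using tan_residual_pos_at_pole[of a q h] a \<open>a < q\<close> q(3) by auto
  ultimately have "0 < cos (h * q)"
    using h a \<open>a < q\<close> by (intro cos_gt_zero) auto
  then have "q \<in> tan_solutions a h"
    using a \<open>a < q\<close> q(3) by (intro tan_solutionsI) auto
  moreover have "q \<le> Q"
    using q(2) unfolding b_def by simp
  ultimately show ?thesis
    unfolding Q_def by blast
qed

lemma tan_solution_sq_ge:
  fixes a h c q :: real
  assumes "0 < a" "0 < h" "0 < c" "q \<in> tan_solutions a h" "a < q"
    and "tan (h * q) \<le> c * (h * q)"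
  shows "a\<^sup>2 + 2 * a / (c * h) \<le> q\<^sup>2"
proof -
  have "0 < q\<^sup>2 - a\<^sup>2"
    using assms(1,5) by (simp add: power_strict_mono)
  moreover have "2 * a * q / (q\<^sup>2 - a\<^sup>2) \<le> c * (h * q)"
    using assms(4,6) unfolding tan_solutions_def by auto
  ultimately have "q * (2 * a) \<le> q * (c * h * (q\<^sup>2 - a\<^sup>2))"
    by (simp add: pos_divide_le_eq algebra_simps)
  then have "2 * a \<le> c * h * (q\<^sup>2 - a\<^sup>2)"
    using assms(1,5) by simp
  then have "2 * a / (c * h) \<le> q\<^sup>2 - a\<^sup>2"
    using assms(2,3) by (simp add: pos_divide_le_eq mult.commute)
  then show ?thesis by simp
qed

lemma tan_solution_ge_sqrt:
  fixes a h q :: real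
  assumes a: "0 < a" and h: "0 < h" and ha: "h * a \<le> 1/3"
    and q: "q \<in> tan_solutions a h"
  shows "sqrt (a\<^sup>2 + 2 * a / (h + 2 * a * h\<^sup>2)) \<le> q"
proof (cases "sqrt (a\<^sup>2 + 2 * a / h) \<le> q")
  case True
  moreover have "sqrt (a\<^sup>2 + 2 * a / (h + 2 * a * h\<^sup>2)) \<le> sqrt (a\<^sup>2 + 2 * a / h)"
    using a h by (intro real_sqrt_le_mono add_left_mono divide_left_mono) (auto simp: add_pos_pos)
  ultimately show ?thesis by linarith
next
  case False
  define t x where "t = h * a" and "x = h * q"
  have t: "0 \<le> t" "t \<le> 1/3"
    unfolding t_def using a h ha by auto
  have q0: "0 < q"
    using q unfolding tan_solutions_def by auto
  have "x < h * sqrt (a\<^sup>2 + 2 * a / h)"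
    using False h unfolding x_def by simp
  then have "x < sqrt (t\<^sup>2 + 2 * t)"
    unfolding t_def mult_sqrt_sq_plus[OF h] .
  moreover have "0 \<le> x"
    unfolding x_def using h q0 by simp
  ultimately have "x\<^sup>2 \<le> (sqrt (t\<^sup>2 + 2 * t))\<^sup>2"
    by (intro power_mono) auto
  then have x_sq: "x\<^sup>2 \<le> t\<^sup>2 + 2 * t"
    using t by simp
  have "t\<^sup>2 + 2 * t < 1"
    using t mult_right_mono[OF t(2) t(1)] unfolding power2_eq_square by linarith
  then have "sqrt (t\<^sup>2 + 2 * t) < 1"
    by simp
  then have "x < 1"
    using \<open>x < sqrt (t\<^sup>2 + 2 * t)\<close> by linarith
  then have "0 < tan x"
    using h q0 pi_gt3 unfolding x_def by (intro tan_gt_zero) auto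
  then have "a < q"
    unfolding x_def by (rule tan_solution_gt[OF a q])
  have "tan x \<le> (1 + 2 * t) * x"
    by (rule tan_le_one_plus_mult[OF t \<open>0 \<le> x\<close> x_sq])
  then have "a\<^sup>2 + 2 * a / ((1 + 2 * t) * h) \<le> q\<^sup>2"
    unfolding x_def using a h t q \<open>a < q\<close> by (intro tan_solution_sq_ge) auto
  moreover have "(1 + 2 * t) * h = h + 2 * a * h\<^sup>2"
    unfolding t_def by (simp add: algebra_simps power2_eq_square)
  ultimately show ?thesis
    using q0 by (intro real_le_lsqrt) auto
qed

lemma alpha1_le_sqrt:
  fixes a h :: real
  assumes "0 < a" "0 < h" "h * a \<le> 1"
  shows "alpha1 a h \<le> sqrt (a\<^sup>2 + 2 * a / h)"
  using tan_solution_le_sqrt[OF assms] alpha1_le by fastforce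

lemma sqrt_le_alpha1:
  fixes a h :: real
  assumes "0 < a" "0 < h" "h * a \<le> 1/3"
  shows "sqrt (a\<^sup>2 + 2 * a / (h + 2 * a * h\<^sup>2)) \<le> alpha1 a h"
proof -
  have "tan_solutions a h \<noteq> {}"
    using tan_solution_le_sqrt[of a h] assms by auto
  then show ?thesis
    unfolding alpha1_def using tan_solution_ge_sqrt[OF assms] by (rule cInf_greatest)
qed

lemma alpha1_tendsto:
  fixes a :: real
  assumes a: "0 < a"
  shows "((\<lambda>h. alpha1 a h / sqrt (2 * a / h)) \<longlongrightarrow> 1) (at_right 0)"
proof (rule tendsto_sandwich)
  have "0 < 1 / (3 * a)"
    using a by simp
  then have small: "\<forall>\<^sub>F h in at_right 0. 0 < h \<and> h * a \<le> 1/3"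
    by (rule eventually_mono[OF eventually_at_right_real]) (use a in \<open>auto simp: field_simps\<close>)
  then show "\<forall>\<^sub>F h in at_right 0.
      sqrt (a * h / 2 + 1 / (1 + 2 * a * h)) \<le> alpha1 a h / sqrt (2 * a / h)"
  proof eventually_elim
    case (elim h)
    then have "h + 2 * a * h\<^sup>2 = h * (1 + 2 * a * h)" "0 < 1 + 2 * a * h"
      using a by (simp_all add: algebra_simps power2_eq_square add_pos_pos)
    then have "sqrt (a\<^sup>2 + 2 * a / (h + 2 * a * h\<^sup>2)) / sqrt (2 * a / h)
        = sqrt (a * h / 2 + 1 / (1 + 2 * a * h))"
      using a elim by (simp add: sqrt_sq_plus_div_sqrt)
    moreover have "sqrt (a\<^sup>2 + 2 * a / (h + 2 * a * h\<^sup>2)) / sqrt (2 * a / h)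
        \<le> alpha1 a h / sqrt (2 * a / h)"
      using a elim sqrt_le_alpha1 by (intro divide_right_mono) auto
    ultimately show ?case by simp
  qed
  from small show "\<forall>\<^sub>F h in at_right 0.
      alpha1 a h / sqrt (2 * a / h) \<le> sqrt (a * h / 2 + 1)"
  proof eventually_elim
    case (elim h)
    then have "alpha1 a h / sqrt (2 * a / h) \<le> sqrt (a\<^sup>2 + 2 * a / (h * 1)) / sqrt (2 * a / h)"
      using a alpha1_le_sqrt by (intro divide_right_mono) auto
    also have "\<dots> = sqrt (a * h / 2 + 1)"
      using a elim sqrt_sq_plus_div_sqrt[of a h 1] by simp
    finally show ?case .
  qed
  have "((\<lambda>h. sqrt (a * h / 2 + 1 / (1 + 2 * a * h))) \<longlongrightarrow>
      sqrt (a * 0 / 2 + 1 / (1 + 2 * a * 0))) (at_right 0)"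
    by (intro tendsto_intros) auto
  then show "((\<lambda>h. sqrt (a * h / 2 + 1 / (1 + 2 * a * h))) \<longlongrightarrow> 1) (at_right 0)"
    by simp
  have "((\<lambda>h. sqrt (a * h / 2 + 1)) \<longlongrightarrow> sqrt (a * 0 / 2 + 1)) (at_right 0)"
    by (intro tendsto_intros) auto
  then show "((\<lambda>h. sqrt (a * h / 2 + 1)) \<longlongrightarrow> 1) (at_right 0)"
    by simp
qed

theorem lemma3p3:
  fixes a :: real
  assumes "a > 0"
  shows "(\<forall>h>0. h * a \<le> 1 \<longrightarrow>
            alpha1 a h \<le> sqrt (a^2 + 2 * a / h) \<and>
            sqrt (a^2 + 2 * a / h) \<le> sqrt (3 * a) / sqrt h)
       \<and> (\<forall>h>0. h * a \<le> 1/3 \<longrightarrow>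
            sqrt (a^2 + 2 * a / (h + 2 * a * h^2)) \<le> alpha1 a h)
       \<and> ((\<lambda>h. alpha1 a h / sqrt (2 * a / h)) \<longlongrightarrow> 1) (at_right 0)"
proof (intro conjI allI impI)
  fix h :: real
  assume "h > 0" "h * a \<le> 1"
  with assms show "alpha1 a h \<le> sqrt (a^2 + 2 * a / h)"
    by (rule alpha1_le_sqrt)
  from assms \<open>h > 0\<close> \<open>h * a \<le> 1\<close> show "sqrt (a^2 + 2 * a / h) \<le> sqrt (3 * a) / sqrt h"
    by (rule sqrt_sq_plus_le_sqrt_div)
next
  fix h :: real
  assume "h > 0" "h * a \<le> 1/3"
  with assms show "sqrt (a^2 + 2 * a / (h + 2 * a * h^2)) \<le> alpha1 a h"
    by (rule sqrt_le_alpha1)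
next
  from assms show "((\<lambda>h. alpha1 a h / sqrt (2 * a / h)) \<longlongrightarrow> 1) (at_right 0)"
    by (rule alpha1_tendsto)
qed

end
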